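(* Let $V:\mathbb{R}^{d_1}\times\mathbb{R}^{d_2}\to\mathbb{R}^n$ be residual-homogeneous, $V(\theta_1,\theta_2)=\Phi\theta_1+g(\theta_2)$, where $\Phi\in\mathbb{R}^{n\times d_1}$ has full rank and $g$ is continuously differentiable and $h$-homogeneous, and suppose there are constants $C,\ell>0$ with $\Vert V(\theta)\Vert_\mu\le C\Vert\theta\Vert^\ell$ for all $\theta=(\theta_1,\theta_2)$. Let $\Pi_\Phi$ be the projection onto the column span of $\Phi$ and let $B_\Phi=\frac{\Vert (I-\gamma P)(V^*-\Pi_\Phi V^* )\Vert_\mu}{1-\gamma}$. Then for any initial condition $\theta(0)=\theta_0$, if $\theta(t)$ follows the dynamics $$\dot\theta=-\nabla V(\theta)^T A\,(V(\theta)-V^* ),$$ we have $\liminf_{t\to\infty}\Vert V(\theta(t))-\Pi_\Phi V^*\Vert_\mu\le B_\Phi$.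
   Context: A Markov reward process has finite state space $\mathcal{S}$ with $|\mathcal{S}|=n$, transition matrix $P$ (entries $P(s'|s)$) defining an irreducible, aperiodic Markov chain with stationary distribution $\mu$, a finite reward function $r(s,s')$, and discount factor $\gamma\in[0,1)$. Let $R(s)=\mathbb{E}_{s'\sim P(\cdot|s)}[r(s,s')]$ and let $V^*\in\mathbb{R}^n$ be the unique solution of $V^*=R+\gamma PV^*$. Let $D_\mu=\mathrm{diag}(\mu)$ and $A:=D_\mu(I-\gamma P)$. For $x\in\mathbb{R}^n$, $\Vert x\Vert_\mu^2=x^TD_\mu x$; $\Vert\theta\Vert$ is the Euclidean norm. $\nabla V(\theta)$ is the Jacobian of $V$ with respect to $\theta=(\theta_1,\theta_2)\in\mathbb{R}^{d_1+d_2}$. A differentiable $f:\mathbb{R}^k\to\mathbb{R}^m$ is $h$-homogeneous (for $h\in\mathbb{R}$) if $f(x)=h\,\nabla f(x)\,x$ for all $x$. The projection $\Pi_\Phi$ is taken orthogonal with respect to the inner product $\langle x,y\rangle_\mu=x^TD_\mu y$. *)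

theory Defs
  imports "HOL-Analysis.Analysis"
begin

text \<open>States are the finite type 'n; P $ s $ s' = P(s'|s).\<close>

fun mpow :: "real^'n^'n \<Rightarrow> nat \<Rightarrow> real^'n^'n" where
  "mpow P 0 = mat 1"
| "mpow P (Suc k) = mpow P k ** P"

definition stochastic :: "real^'n^'n \<Rightarrow> bool" where
  "stochastic P \<longleftrightarrow> (\<forall>s s'. P $ s $ s' \<ge> 0) \<and> (\<forall>s. (\<Sum>s'\<in>UNIV. P $ s $ s') = 1)"

definition irreducible_chain :: "real^'n^'n \<Rightarrow> bool" where
  "irreducible_chain P \<longleftrightarrow> (\<forall>s s'. \<exists>k>0. mpow P k $ s $ s' > 0)"

definition aperiodic_chain :: "real^'n^'n \<Rightarrow> bool" where
  "aperiodic_chain P \<longleftrightarrow> (\<forall>s. Gcd {k::nat. k > 0 \<and> mpow P k $ s $ s > 0} = 1)"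

definition stationary_dist :: "real^'n^'n \<Rightarrow> real^'n \<Rightarrow> bool" where
  "stationary_dist P \<mu> \<longleftrightarrow> (\<forall>s. \<mu> $ s \<ge> 0) \<and> (\<Sum>s\<in>UNIV. \<mu> $ s) = 1 \<and> \<mu> v* P = \<mu>"

definition expected_reward :: "real^'n^'n \<Rightarrow> ('n \<Rightarrow> 'n \<Rightarrow> real) \<Rightarrow> real^'n" where
  "expected_reward P r = (\<chi> s. \<Sum>s'\<in>UNIV. P $ s $ s' * r s s')"

definition Dmu :: "real^'n \<Rightarrow> real^'n^'n" where
  "Dmu \<mu> = (\<chi> i j. if i = j then \<mu> $ i else 0)"

definition Amat :: "real^'n \<Rightarrow> real \<Rightarrow> real^'n^'n \<Rightarrow> real^'n^'n" where
  "Amat \<mu> \<gamma> P = Dmu \<mu> ** (mat 1 - \<gamma> *\<^sub>R P)"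

definition mu_inner :: "real^'n \<Rightarrow> real^'n \<Rightarrow> real^'n \<Rightarrow> real" where
  "mu_inner \<mu> x y = x \<bullet> (Dmu \<mu> *v y)"

definition mu_norm :: "real^'n \<Rightarrow> real^'n \<Rightarrow> real" where
  "mu_norm \<mu> x = sqrt (mu_inner \<mu> x x)"

definition proj_mu :: "real^'n \<Rightarrow> real^'d^'n \<Rightarrow> real^'n \<Rightarrow> real^'n" where
  "proj_mu \<mu> \<Phi> v = (THE u. u \<in> range (\<lambda>x. \<Phi> *v x) \<and>
      (\<forall>w \<in> range (\<lambda>x. \<Phi> *v x). mu_inner \<mu> (v - u) w = 0))"

end

theory Submission
  imports Defs
begin

text \<open>Let \<open>\<Phi> x\<^sub>1 = \<Pi>\<^sub>\<Phi> V\<^sup>*\<close>, \<open>u = V(\<theta>) - \<Pi>\<^sub>\<Phi> V\<^sup>*\<close> and \<open>e = V\<^sup>* - \<Pi>\<^sub>\<Phi> V\<^sup>*\<close>.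
  Along the flow, \<open>L = \<parallel>\<theta>\<^sub>1 - x\<^sub>1\<parallel>\<^sup>2 + max h 0 \<parallel>\<theta>\<^sub>2\<parallel>\<^sup>2\<close> has derivative
  \<open>-2 \<langle>u, (I - \<gamma>P)(u - e)\<rangle>\<^sub>\<mu>\<close>: Euler's identity \<open>g(\<theta>\<^sub>2) = h \<nabla>g(\<theta>\<^sub>2) \<theta>\<^sub>2\<close> (and \<open>g = 0\<close>
  when \<open>h \<le> 0\<close>) turns the gradient terms into \<open>\<langle>u, A (V - V\<^sup>*)\<rangle>\<close>. As \<open>P\<close> is a contraction
  in \<open>\<parallel>\<cdot>\<parallel>\<^sub>\<mu>\<close>, this derivative is at most \<open>-2(1 - \<gamma>) \<parallel>u\<parallel>\<^sub>\<mu> (\<parallel>u\<parallel>\<^sub>\<mu> - B\<^sub>\<Phi>)\<close>, so if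
  \<open>\<parallel>u\<parallel>\<^sub>\<mu>\<close> stayed above some \<open>y > B\<^sub>\<Phi>\<close>, the nonnegative \<open>L\<close> would decrease linearly forever.\<close>

lemma Dmu_mult_vector: "Dmu \<mu> *v y = (\<chi> i. \<mu> $ i * y $ i)"
  unfolding Dmu_def matrix_vector_mult_def vec_eq_iff
  by (auto simp: if_distrib[of "\<lambda>a. a * _"] cong: if_cong)

lemma mu_inner_eq_sum: "mu_inner \<mu> x y = (\<Sum>i\<in>UNIV. \<mu> $ i * x $ i * y $ i)"
  by (simp add: mu_inner_def Dmu_mult_vector inner_vec_def mult_ac)

lemma mu_inner_diff_right: "mu_inner \<mu> x (y - z) = mu_inner \<mu> x y - mu_inner \<mu> x z"
  by (simp add: mu_inner_def matrix_vector_mult_diff_distrib inner_diff_right)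

lemma mu_inner_diff_left: "mu_inner \<mu> (x - y) z = mu_inner \<mu> x z - mu_inner \<mu> y z"
  by (simp add: mu_inner_def inner_diff_left)

lemma mu_inner_scaleR_right: "mu_inner \<mu> x (c *\<^sub>R y) = c * mu_inner \<mu> x y"
  by (simp add: mu_inner_def scaleR_matrix_vector_assoc[symmetric] matrix_scaleR_vector_ac)

definition sqrt_weight :: "real^'n \<Rightarrow> real^'n \<Rightarrow> real^'n" where
  "sqrt_weight \<mu> x = (\<chi> i. sqrt (\<mu> $ i) * x $ i)"

lemma linear_sqrt_weight: "linear (sqrt_weight \<mu>)"
  by (rule linearI) (simp_all add: sqrt_weight_def vec_eq_iff algebra_simps)

lemma mu_inner_eq_inner_sqrt_weight:
  assumes "\<And>i. 0 \<le> \<mu> $ i"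
  shows "mu_inner \<mu> x y = sqrt_weight \<mu> x \<bullet> sqrt_weight \<mu> y"
  unfolding mu_inner_eq_sum sqrt_weight_def inner_vec_def
  by (rule sum.cong) (use assms in \<open>auto simp: algebra_simps\<close>)

lemma mu_norm_eq_norm_sqrt_weight:
  assumes "\<And>i. 0 \<le> \<mu> $ i"
  shows "mu_norm \<mu> x = norm (sqrt_weight \<mu> x)"
  by (simp add: mu_norm_def mu_inner_eq_inner_sqrt_weight[OF assms] norm_eq_sqrt_inner)

lemma mu_inner_self_eq_mu_norm_sq:
  assumes "\<And>i. 0 \<le> \<mu> $ i"
  shows "mu_inner \<mu> x x = (mu_norm \<mu> x)\<^sup>2"
  by (simp add: mu_inner_eq_inner_sqrt_weight[OF assms] mu_norm_eq_norm_sqrt_weight[OF assms]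
      power2_norm_eq_inner)

lemma mu_inner_le_mu_norm_mult:
  assumes "\<And>i. 0 \<le> \<mu> $ i"
  shows "mu_inner \<mu> x y \<le> mu_norm \<mu> x * mu_norm \<mu> y"
  by (simp add: mu_inner_eq_inner_sqrt_weight[OF assms] mu_norm_eq_norm_sqrt_weight[OF assms]
      norm_cauchy_schwarz)

lemma mu_inner_self_eq_0:
  assumes "\<And>i. 0 < \<mu> $ i" and "mu_inner \<mu> x x = 0"
  shows "x = 0"
proof -
  have "sqrt_weight \<mu> x = 0"
    using assms by (simp add: mu_inner_eq_inner_sqrt_weight less_imp_le)
  then show ?thesis
    using assms(1) by (simp add: sqrt_weight_def vec_eq_iff) (metis less_irrefl)
qed

lemma mpow_nonneg: "stochastic P \<Longrightarrow> 0 \<le> mpow P k $ i $ j"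
proof (induction k arbitrary: j)
  case 0
  then show ?case by (simp add: mat_def)
next
  case (Suc k)
  then show ?case by (auto simp: matrix_matrix_mult_def stochastic_def intro!: sum_nonneg)
qed

lemma stationary_dist_mpow: "stationary_dist P \<mu> \<Longrightarrow> \<mu> v* mpow P k = \<mu>"
  by (induction k)
    (simp_all add: vector_matrix_mul_rid vector_matrix_mul_assoc[symmetric] stationary_dist_def)

lemma stationary_dist_pos:
  assumes P: "stochastic P" "irreducible_chain P" and \<mu>: "stationary_dist P \<mu>"
  shows "0 < \<mu> $ s"
proof -
  have nonneg: "\<And>i. 0 \<le> \<mu> $ i" and "sum (($) \<mu>) UNIV = 1"
    using \<mu> by (auto simp: stationary_dist_def)
  then obtain s0 where s0: "0 < \<mu> $ s0"
    by (metis (mono_tags) less_eq_real_def sum.neutral zero_neq_one)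
  obtain k where k: "0 < mpow P k $ s0 $ s"
    using P(2) by (auto simp: irreducible_chain_def)
  have "mpow P k $ s0 $ s * \<mu> $ s0 \<le> (\<Sum>i\<in>UNIV. mpow P k $ i $ s * \<mu> $ i)"
    by (rule member_le_sum) (auto intro!: mult_nonneg_nonneg mpow_nonneg P(1) nonneg)
  also have "\<dots> = (\<mu> v* mpow P k) $ s"
    by (simp add: vector_matrix_mult_def mult.commute)
  also have "\<dots> = \<mu> $ s"
    using stationary_dist_mpow[OF \<mu>] by simp
  finally show ?thesis
    using mult_pos_pos[OF k s0] by linarith
qed

text \<open>Termwise \<open>x\<^sub>i x\<^sub>j \<le> (x\<^sub>i\<^sup>2 + x\<^sub>j\<^sup>2) / 2\<close>; the two halves of the bound both equal
  \<open>\<parallel>x\<parallel>\<^sub>\<mu>\<^sup>2\<close>, one by the row sums of \<open>P\<close>, the other by stationarity of \<open>\<mu>\<close>.\<close>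
lemma mu_inner_stochastic_le:
  assumes P: "stochastic P" and \<mu>: "stationary_dist P \<mu>"
  shows "mu_inner \<mu> x (P *v x) \<le> mu_inner \<mu> x x"
proof -
  have nonneg: "0 \<le> \<mu> $ i * P $ i $ j" for i j
    using P \<mu> by (simp add: stochastic_def stationary_dist_def)
  have row_sum: "(\<Sum>j\<in>UNIV. P $ i $ j) = 1" for i
    using P by (simp add: stochastic_def)
  have column_sum: "(\<Sum>i\<in>UNIV. \<mu> $ i * P $ i $ j) = \<mu> $ j" for j
    using \<mu> by (simp add: stationary_dist_def vec_eq_iff vector_matrix_mult_def mult.commute)
  have "mu_inner \<mu> x (P *v x) = (\<Sum>i\<in>UNIV. \<Sum>j\<in>UNIV. \<mu> $ i * P $ i $ j * (x $ i * x $ j))"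
    by (simp add: mu_inner_eq_sum matrix_vector_mult_def sum_distrib_left mult_ac)
  also have "\<dots> \<le> (\<Sum>i\<in>UNIV. \<Sum>j\<in>UNIV. \<mu> $ i * P $ i $ j * (((x $ i)\<^sup>2 + (x $ j)\<^sup>2) / 2))"
    by (intro sum_mono mult_left_mono[OF _ nonneg])
      (use sum_squares_bound[of "x $ i" "x $ j" for i j] in \<open>simp add: power2_eq_square algebra_simps\<close>)
  also have "\<dots> = (\<Sum>i\<in>UNIV. \<Sum>j\<in>UNIV. \<mu> $ i * (x $ i)\<^sup>2 * P $ i $ j) / 2
                 + (\<Sum>i\<in>UNIV. \<Sum>j\<in>UNIV. (x $ j)\<^sup>2 * (\<mu> $ i * P $ i $ j)) / 2"
  proof -
    have "\<mu> $ i * P $ i $ j * (((x $ i)\<^sup>2 + (x $ j)\<^sup>2) / 2)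
        = \<mu> $ i * (x $ i)\<^sup>2 * P $ i $ j / 2 + (x $ j)\<^sup>2 * (\<mu> $ i * P $ i $ j) / 2" for i j
      by (simp add: field_simps)
    then show ?thesis
      by (simp only: sum.distrib sum_divide_distrib)
  qed
  also have "\<dots> = (\<Sum>i\<in>UNIV. \<mu> $ i * (x $ i)\<^sup>2 * (\<Sum>j\<in>UNIV. P $ i $ j)) / 2
                 + (\<Sum>j\<in>UNIV. (x $ j)\<^sup>2 * (\<Sum>i\<in>UNIV. \<mu> $ i * P $ i $ j)) / 2"
    by (simp only: sum_distrib_left sum.swap[of "\<lambda>i j. (x $ j)\<^sup>2 * (\<mu> $ i * P $ i $ j)"])
  also have "\<dots> = mu_inner \<mu> x x"
    by (simp add: row_sum column_sum mu_inner_eq_sum power2_eq_square mult_ac)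
  finally show ?thesis .
qed

lemma mu_inner_resolvent_ge:
  assumes "stochastic P" and "stationary_dist P \<mu>" and "0 \<le> \<gamma>"
  shows "(1 - \<gamma>) * mu_inner \<mu> x x \<le> mu_inner \<mu> x ((mat 1 - \<gamma> *\<^sub>R P) *v x)"
  using mult_left_mono[OF mu_inner_stochastic_le[OF assms(1,2)] assms(3), of x]
  by (simp add: matrix_vector_mult_diff_rdistrib scaleR_matrix_vector_assoc[symmetric]
      mu_inner_diff_right mu_inner_scaleR_right algebra_simps)

lemma mu_orthogonal_projection_exists:
  assumes "\<And>i. 0 \<le> \<mu> $ i" and "subspace S"
  shows "\<exists>u\<in>S. \<forall>w\<in>S. mu_inner \<mu> (v - u) w = 0"
proof -
  have span_eq: "span (sqrt_weight \<mu> ` S) = sqrt_weight \<mu> ` S"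
    by (simp add: span_eq_iff linear_subspace_image[OF linear_sqrt_weight assms(2)])
  obtain y z where y: "y \<in> sqrt_weight \<mu> ` S"
    and z: "\<And>w. w \<in> sqrt_weight \<mu> ` S \<Longrightarrow> orthogonal z w" and yz: "sqrt_weight \<mu> v = y + z"
    using orthogonal_subspace_decomp_exists[of "sqrt_weight \<mu> ` S" "sqrt_weight \<mu> v"]
    unfolding span_eq by blast
  obtain u where u: "u \<in> S" "y = sqrt_weight \<mu> u"
    using y by blast
  have "sqrt_weight \<mu> (v - u) = z"
    using yz u by (simp add: linear_diff[OF linear_sqrt_weight])
  then have "mu_inner \<mu> (v - u) w = 0" if "w \<in> S" for w
    using z[of "sqrt_weight \<mu> w"] that
    by (simp add: mu_inner_eq_inner_sqrt_weight[OF assms(1)] orthogonal_def)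
  with u show ?thesis by blast
qed

lemma mu_orthogonal_projection_unique:
  assumes "\<And>i. 0 < \<mu> $ i" and "subspace S"
    and "u1 \<in> S" "\<forall>w\<in>S. mu_inner \<mu> (v - u1) w = 0"
    and "u2 \<in> S" "\<forall>w\<in>S. mu_inner \<mu> (v - u2) w = 0"
  shows "u1 = u2"
proof -
  have "u1 - u2 \<in> S"
    using assms(2,3,5) by (rule subspace_diff)
  then have "mu_inner \<mu> (v - u2) (u1 - u2) - mu_inner \<mu> (v - u1) (u1 - u2) = 0"
    using assms(4,6) by simp
  then have "mu_inner \<mu> (u1 - u2) (u1 - u2) = 0"
    using mu_inner_diff_left[of \<mu> "v - u2" "v - u1" "u1 - u2"] by simp
  then have "u1 - u2 = 0"
    by (rule mu_inner_self_eq_0[OF assms(1)])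
  then show ?thesis
    by simp
qed

lemma proj_mu_in_range:
  assumes "\<And>i. 0 < \<mu> $ i"
  shows "proj_mu \<mu> \<Phi> v \<in> range (\<lambda>x. \<Phi> *v x)"
proof -
  let ?S = "range (\<lambda>x. \<Phi> *v x)"
  have S: "subspace ?S"
    by (rule linear_subspace_image[OF matrix_vector_mul_linear subspace_UNIV])
  obtain u where "u \<in> ?S" "\<forall>w\<in>?S. mu_inner \<mu> (v - u) w = 0"
    using mu_orthogonal_projection_exists[OF _ S] assms less_imp_le by blast
  then have "\<exists>!u. u \<in> ?S \<and> (\<forall>w\<in>?S. mu_inner \<mu> (v - u) w = 0)"
    using mu_orthogonal_projection_unique[OF assms S] by blast
  from theI'[OF this] show ?thesis
    unfolding proj_mu_def by blast
qed

text \<open>For \<open>h < 0\<close> the map \<open>c \<mapsto> c powr (-1/h) *\<^sub>R g (c *\<^sub>R x)\<close> has zero derivative on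
  \<open>{0<..}\<close>, so it is constant there; by continuity of \<open>g\<close> it tends to \<open>0\<close> as \<open>c \<rightarrow> 0\<^sup>+\<close>,
  while its value at \<open>c = 1\<close> is \<open>g x\<close>.\<close>
lemma homogeneous_nonpos_eq_0:
  fixes g :: "real^'d \<Rightarrow> real^'n" and Jg :: "real^'d \<Rightarrow> real^'d^'n"
  assumes g_deriv: "\<And>x. (g has_derivative (\<lambda>v. Jg x *v v)) (at x)"
    and g_hom: "\<And>x. g x = h *\<^sub>R (Jg x *v x)"
    and "h \<le> 0"
  shows "g x = 0"
proof (cases "h = 0")
  case True
  then show ?thesis using g_hom by simp
next
  case False
  with \<open>h \<le> 0\<close> have "h < 0" by simp
  define a where "a = - 1 / h"
  have "0 < a" and ah: "a * h = - 1"
    using \<open>h < 0\<close> by (simp_all add: a_def)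
  define \<psi> where "\<psi> c = c powr a *\<^sub>R g (c *\<^sub>R x)" for c :: real
  have g_ray: "((\<lambda>c. g (c *\<^sub>R x)) has_vector_derivative (Jg (c *\<^sub>R x) *v x)) (at c)" for c
    using has_derivative_compose[OF has_derivative_scaleR_left[OF has_derivative_ident] g_deriv]
    by (simp add: has_vector_derivative_def matrix_scaleR_vector_ac scaleR_matrix_vector_assoc)
  have "(\<psi> has_vector_derivative 0) (at c within {0<..})" if "c \<in> {0<..}" for c
  proof -
    have c: "0 < c" using that by simp
    have "a * c powr (a - 1) * (h * c) = (a * h) * (c powr (a - 1) * c)"
      by (simp only: mult_ac)
    also have "\<dots> = - (c powr a)"
      using c ah by (simp add: powr_diff)
    moreover have "g (c *\<^sub>R x) = (h * c) *\<^sub>R (Jg (c *\<^sub>R x) *v x)"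
      using g_hom[of "c *\<^sub>R x"] by (simp add: matrix_scaleR_vector_ac scaleR_matrix_vector_assoc)
    ultimately have "c powr a *\<^sub>R (Jg (c *\<^sub>R x) *v x) + (a * c powr (a - 1)) *\<^sub>R g (c *\<^sub>R x) = 0"
      by (simp add: scaleR_add_left[symmetric])
    then show ?thesis
      using has_vector_derivative_scaleR[OF has_real_derivative_powr[OF c] g_ray, of a]
      unfolding \<psi>_def by (simp add: has_vector_derivative_at_within)
  qed
  then obtain K where K: "\<And>c. 0 < c \<Longrightarrow> \<psi> c = K"
    using has_vector_derivative_zero_constant[of "{0<..}" \<psi>] by auto
  have "(\<psi> \<longlongrightarrow> K) (at_right 0)"
    using K by (intro tendsto_eventually eventually_at_rightI[of 0 1]) auto
  moreover have "(\<psi> \<longlongrightarrow> 0 *\<^sub>R g (0 *\<^sub>R x)) (at_right 0)"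
    unfolding \<psi>_def
  proof (intro tendsto_scaleR)
    show "((\<lambda>c::real. c powr a) \<longlongrightarrow> 0) (at_right 0)"
      by (rule tendsto_zero_powrI[OF _ tendsto_const _ \<open>0 < a\<close>])
        (auto intro: tendsto_ident_at eventually_at_rightI[of 0 1])
    show "((\<lambda>c. g (c *\<^sub>R x)) \<longlongrightarrow> g (0 *\<^sub>R x)) (at_right 0)"
      by (intro isCont_tendsto_compose[OF has_derivative_continuous[OF g_deriv]] tendsto_intros)
  qed
  ultimately have "K = 0"
    using tendsto_unique[OF trivial_limit_at_right_real] by fastforce
  then show ?thesis
    using K[of 1] by (simp add: \<psi>_def)
qed

lemma homogeneous_eq_max_0:
  fixes g :: "real^'d \<Rightarrow> real^'n" and Jg :: "real^'d \<Rightarrow> real^'d^'n"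
  assumes "\<And>x. (g has_derivative (\<lambda>v. Jg x *v v)) (at x)"
    and "\<And>x. g x = h *\<^sub>R (Jg x *v x)"
  shows "g x = max h 0 *\<^sub>R (Jg x *v x)"
  using homogeneous_nonpos_eq_0[OF assms] assms(2) by (cases "0 < h") auto

lemma inner_transpose_mult: "x \<bullet> (transpose A *v w) = (A *v x) \<bullet> (w::real^'n)"
  by (metis dot_lmul_matrix vector_transpose_matrix)

lemma weighted_sq_dist_has_derivative:
  fixes \<theta> :: "real \<Rightarrow> (real^'d1) \<times> (real^'d2)" and \<Phi> :: "real^'d1^'n" and J :: "real^'d2^'n"
  assumes "(\<theta> has_vector_derivative - (transpose \<Phi> *v w, transpose J *v w)) (at t)"
  shows "((\<lambda>s. (norm (fst (\<theta> s) - a))\<^sup>2 + k * (norm (snd (\<theta> s)))\<^sup>2) has_real_derivative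
           - 2 * ((\<Phi> *v (fst (\<theta> t) - a) + k *\<^sub>R (J *v snd (\<theta> t))) \<bullet> w)) (at t)"
proof -
  define v1 where "v1 = - (transpose \<Phi> *v w)"
  define v2 where "v2 = - (transpose J *v w)"
  have "(\<theta> has_derivative (\<lambda>s. s *\<^sub>R (v1, v2))) (at t)"
    using assms by (simp add: has_vector_derivative_def v1_def v2_def)
  from has_derivative_fst[OF this] has_derivative_snd[OF this]
  have "((\<lambda>s. fst (\<theta> s)) has_derivative (\<lambda>s. s *\<^sub>R v1)) (at t)"
    and "((\<lambda>s. snd (\<theta> s)) has_derivative (\<lambda>s. s *\<^sub>R v2)) (at t)"
    by simp_all
  then have "((\<lambda>s. (fst (\<theta> s) - a) \<bullet> (fst (\<theta> s) - a) + k * (snd (\<theta> s) \<bullet> snd (\<theta> s))) has_derivative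
      (\<lambda>s. (fst (\<theta> t) - a) \<bullet> (s *\<^sub>R v1) + (s *\<^sub>R v1) \<bullet> (fst (\<theta> t) - a)
          + k * (snd (\<theta> t) \<bullet> (s *\<^sub>R v2) + (s *\<^sub>R v2) \<bullet> snd (\<theta> t)))) (at t)"
    by (intro has_derivative_add has_derivative_mult_right has_derivative_inner
        has_derivative_diff[where g'="\<lambda>_. 0", simplified] has_derivative_const)
  moreover have "x \<bullet> v1 = - ((\<Phi> *v x) \<bullet> w)" and "y \<bullet> v2 = - ((J *v y) \<bullet> w)" for x y
    by (simp_all only: v1_def v2_def inner_minus_right inner_transpose_mult)
  then have "(fst (\<theta> t) - a) \<bullet> (s *\<^sub>R v1) + (s *\<^sub>R v1) \<bullet> (fst (\<theta> t) - a)
          + k * (snd (\<theta> t) \<bullet> (s *\<^sub>R v2) + (s *\<^sub>R v2) \<bullet> snd (\<theta> t))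
      = - 2 * ((\<Phi> *v (fst (\<theta> t) - a) + k *\<^sub>R (J *v snd (\<theta> t))) \<bullet> w) * s" for s
    by (simp add: inner_commute[of v1] inner_commute[of v2] inner_add_left algebra_simps)
  ultimately show ?thesis
    unfolding has_field_derivative_def power2_norm_eq_inner
    by (elim has_derivative_eq_rhs) (simp add: fun_eq_iff)
qed

lemma residual_flow_lyapunov_has_derivative:
  fixes \<theta> :: "real \<Rightarrow> (real^'d1) \<times> (real^'d2)" and \<Phi> :: "real^'d1^'n"
    and g :: "real^'d2 \<Rightarrow> real^'n" and Jg :: "real^'d2 \<Rightarrow> real^'d2^'n"
  assumes g_deriv: "\<And>x. (g has_derivative (\<lambda>v. Jg x *v v)) (at x)"
    and g_hom: "\<And>x. g x = h *\<^sub>R (Jg x *v x)"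
    and "0 < t"
    and flow: "(\<theta> has_vector_derivative
         (let V = \<Phi> *v fst (\<theta> t) + g (snd (\<theta> t));
              w = Amat \<mu> \<gamma> P *v (V - Vs)
          in - (transpose \<Phi> *v w, transpose (Jg (snd (\<theta> t))) *v w)))
       (at t within {0..})"
  shows "((\<lambda>s. (norm (fst (\<theta> s) - a))\<^sup>2 + max h 0 * (norm (snd (\<theta> s)))\<^sup>2) has_real_derivative
           - 2 * mu_inner \<mu> (\<Phi> *v fst (\<theta> t) + g (snd (\<theta> t)) - \<Phi> *v a)
                   ((mat 1 - \<gamma> *\<^sub>R P) *v (\<Phi> *v fst (\<theta> t) + g (snd (\<theta> t)) - Vs))) (at t)"
proof -
  define w where "w = Amat \<mu> \<gamma> P *v (\<Phi> *v fst (\<theta> t) + g (snd (\<theta> t)) - Vs)"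
  have "at t within {0..} = at t"
    using \<open>0 < t\<close> by (intro at_within_interior) simp
  then have "(\<theta> has_vector_derivative - (transpose \<Phi> *v w, transpose (Jg (snd (\<theta> t))) *v w)) (at t)"
    using flow by (simp add: w_def Let_def)
  moreover have "\<Phi> *v (fst (\<theta> t) - a) + max h 0 *\<^sub>R (Jg (snd (\<theta> t)) *v snd (\<theta> t))
      = \<Phi> *v fst (\<theta> t) + g (snd (\<theta> t)) - \<Phi> *v a"
    by (simp add: matrix_vector_mult_diff_distrib homogeneous_eq_max_0[OF g_deriv g_hom])
  moreover have "w = Dmu \<mu> *v ((mat 1 - \<gamma> *\<^sub>R P) *v (\<Phi> *v fst (\<theta> t) + g (snd (\<theta> t)) - Vs))"
    by (simp add: w_def Amat_def matrix_vector_mul_assoc)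
  ultimately show ?thesis
    using weighted_sq_dist_has_derivative[of \<theta> \<Phi> w "Jg (snd (\<theta> t))" t a "max h 0"]
    by (simp add: mu_inner_def)
qed

lemma nonneg_not_uniformly_decreasing:
  fixes L D :: "real \<Rightarrow> real"
  assumes L_deriv: "\<And>t. T \<le> t \<Longrightarrow> (L has_real_derivative D t) (at t)"
    and D_le: "\<And>t. T \<le> t \<Longrightarrow> D t \<le> - \<delta>" and "0 < \<delta>"
    and L_nonneg: "\<And>t. T \<le> t \<Longrightarrow> 0 \<le> L t"
  shows False
proof -
  define b where "b = T + L T / \<delta> + 1"
  have "T \<le> b"
    using \<open>0 < \<delta>\<close> L_nonneg[of T] by (simp add: b_def)
  have "(\<lambda>t. L t + \<delta> * t) b \<le> (\<lambda>t. L t + \<delta> * t) T"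
  proof (rule DERIV_nonpos_imp_nonincreasing[OF \<open>T \<le> b\<close>])
    fix t
    assume "T \<le> t"
    then have "((\<lambda>t. L t + \<delta> * t) has_real_derivative D t + \<delta> * 1) (at t)"
      by (intro DERIV_add L_deriv DERIV_cmult DERIV_ident)
    with D_le[OF \<open>T \<le> t\<close>]
    show "\<exists>y. ((\<lambda>t. L t + \<delta> * t) has_real_derivative y) (at t) \<and> y \<le> 0"
      by force
  qed
  moreover have "\<delta> * (b - T) = L T + \<delta>"
    using \<open>0 < \<delta>\<close> by (simp add: b_def field_simps)
  ultimately have "L b \<le> - \<delta>"
    by (simp add: algebra_simps)
  then show False
    using L_nonneg[OF \<open>T \<le> b\<close>] \<open>0 < \<delta>\<close> by linarith
qed

lemma Liminf_le_of_Lyapunov: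
  fixes L D u :: "real \<Rightarrow> real"
  assumes L_nonneg: "\<And>t. 0 \<le> L t"
    and L_deriv: "\<And>t. 0 < t \<Longrightarrow> (L has_real_derivative D t) (at t)"
    and D_le: "\<And>t. 0 < t \<Longrightarrow> D t \<le> - c * (u t * (u t - B))"
    and "0 < c" "0 \<le> B"
  shows "Liminf at_top (\<lambda>t. ereal (u t)) \<le> ereal B"
proof (rule ccontr)
  assume "\<not> ?thesis"
  then have "ereal B < Liminf at_top (\<lambda>t. ereal (u t))"
    by simp
  from ereal_dense2[OF this] obtain y
    where "B < y" and "ereal y < Liminf at_top (\<lambda>t. ereal (u t))"
    by auto
  from less_LiminfD[OF this(2)] have "\<forall>\<^sub>F t in at_top. y < u t"
    by simp
  then obtain T where T: "\<And>t. T \<le> t \<Longrightarrow> y < u t"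
    by (auto simp: eventually_at_top_linorder)
  have D_le_rate: "D t \<le> - (c * (y * (y - B)))" if "max T 1 \<le> t" for t
  proof -
    have "y * (y - B) \<le> u t * (u t - B)"
      using T[of t] that \<open>B < y\<close> \<open>0 \<le> B\<close> by (intro mult_mono) auto
    then have "c * (y * (y - B)) \<le> c * (u t * (u t - B))"
      using \<open>0 < c\<close> by simp
    then show ?thesis
      using D_le[of t] that by simp
  qed
  have "0 < c * (y * (y - B))"
    using \<open>0 < c\<close> \<open>B < y\<close> \<open>0 \<le> B\<close> by simp
  then show False
    using nonneg_not_uniformly_decreasing[where T="max T 1", OF L_deriv D_le_rate _ L_nonneg] by force
qed

lemma mu_inner_resolvent_diff_ge:
  assumes "stochastic P" and "stationary_dist P \<mu>" and "0 \<le> \<gamma>" and "\<gamma> < 1"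
  shows "(1 - \<gamma>) * (mu_norm \<mu> x * (mu_norm \<mu> x - mu_norm \<mu> ((mat 1 - \<gamma> *\<^sub>R P) *v y) / (1 - \<gamma>)))
    \<le> mu_inner \<mu> x ((mat 1 - \<gamma> *\<^sub>R P) *v (x - y))"
proof -
  let ?M = "mat 1 - \<gamma> *\<^sub>R P"
  have nonneg: "\<And>i. 0 \<le> \<mu> $ i"
    using assms(2) by (simp add: stationary_dist_def)
  have "(1 - \<gamma>) * (mu_norm \<mu> x * (mu_norm \<mu> x - mu_norm \<mu> (?M *v y) / (1 - \<gamma>)))
      = (1 - \<gamma>) * (mu_norm \<mu> x)\<^sup>2 - mu_norm \<mu> x * mu_norm \<mu> (?M *v y)"
    using assms(4) by (simp add: field_simps power2_eq_square)
  also have "\<dots> \<le> mu_inner \<mu> x (?M *v x) - mu_inner \<mu> x (?M *v y)"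
    using mu_inner_resolvent_ge[OF assms(1-3), of x]
      mu_inner_le_mu_norm_mult[OF nonneg, of x "?M *v y"]
    by (simp add: mu_inner_self_eq_mu_norm_sq[OF nonneg])
  also have "\<dots> = mu_inner \<mu> x (?M *v (x - y))"
    by (simp add: matrix_vector_mult_diff_distrib mu_inner_diff_right)
  finally show ?thesis .
qed

theorem theorem2:
  fixes P :: "real^'n^'n" and \<mu> :: "real^'n" and r :: "'n \<Rightarrow> 'n \<Rightarrow> real"
    and \<gamma> :: real and Vs :: "real^'n"
    and \<Phi> :: "real^'d1^'n" and g :: "real^'d2 \<Rightarrow> real^'n"
    and Jg :: "real^'d2 \<Rightarrow> real^'d2^'n" and h :: real
    and C ell :: real
    and \<theta> :: "real \<Rightarrow> (real^'d1) \<times> (real^'d2)" and \<theta>0 :: "(real^'d1) \<times> (real^'d2)"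
  assumes P: "stochastic P" "irreducible_chain P" "aperiodic_chain P"
    and mu: "stationary_dist P \<mu>"
    and gamma: "0 \<le> \<gamma>" "\<gamma> < 1"
    and Vs: "Vs = expected_reward P r + \<gamma> *\<^sub>R (P *v Vs)"
    and Phi_rank: "rank \<Phi> = min CARD('n) CARD('d1)"
    and g_deriv: "\<And>x. (g has_derivative (\<lambda>v. Jg x *v v)) (at x)"
    and Jg_cont: "continuous_on UNIV Jg"
    and g_hom: "\<And>x. g x = h *\<^sub>R (Jg x *v x)"
    and C: "C > 0" and ell: "ell > 0"
    and growth: "\<And>\<theta>1 \<theta>2. mu_norm \<mu> (\<Phi> *v \<theta>1 + g \<theta>2) \<le> C * norm (\<theta>1, \<theta>2) powr ell"
    and init: "\<theta> 0 = \<theta>0"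
    and flow: "\<And>t. t \<ge> 0 \<Longrightarrow>
      (\<theta> has_vector_derivative
         (let V = \<Phi> *v fst (\<theta> t) + g (snd (\<theta> t));
              w = Amat \<mu> \<gamma> P *v (V - Vs)
          in - (transpose \<Phi> *v w, transpose (Jg (snd (\<theta> t))) *v w)))
       (at t within {0..})"
  shows "Liminf at_top (\<lambda>t. ereal (mu_norm \<mu> (\<Phi> *v fst (\<theta> t) + g (snd (\<theta> t)) - proj_mu \<mu> \<Phi> Vs)))
           \<le> ereal (mu_norm \<mu> ((mat 1 - \<gamma> *\<^sub>R P) *v (Vs - proj_mu \<mu> \<Phi> Vs)) / (1 - \<gamma>))"
proof -
  define p where "p = proj_mu \<mu> \<Phi> Vs"
  define M where "M = mat 1 - \<gamma> *\<^sub>R P"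
  define B where "B = mu_norm \<mu> (M *v (Vs - p)) / (1 - \<gamma>)"
  define u where "u t = \<Phi> *v fst (\<theta> t) + g (snd (\<theta> t)) - p" for t
  have pos: "\<And>i. 0 < \<mu> $ i"
    using stationary_dist_pos[OF P(1,2) mu] .
  then obtain x1 where x1: "p = \<Phi> *v x1"
    using proj_mu_in_range unfolding p_def by blast
  define L where "L t = (norm (fst (\<theta> t) - x1))\<^sup>2 + max h 0 * (norm (snd (\<theta> t)))\<^sup>2" for t
  have L_nonneg: "0 \<le> L t" for t
    by (simp add: L_def)
  have L_deriv: "(L has_real_derivative - 2 * mu_inner \<mu> (u t) (M *v (u t - (Vs - p)))) (at t)"
    if "0 < t" for t
    using residual_flow_lyapunov_has_derivative[OF g_deriv g_hom that flow[of t], of x1] that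
    unfolding L_def u_def M_def x1 by (simp add: add_diff_eq)
  have D_le: "- 2 * mu_inner \<mu> (u t) (M *v (u t - (Vs - p)))
      \<le> - (2 * (1 - \<gamma>)) * (mu_norm \<mu> (u t) * (mu_norm \<mu> (u t) - B))" for t
    using mu_inner_resolvent_diff_ge[OF P(1) mu gamma, of "u t" "Vs - p"]
    unfolding B_def M_def by linarith
  have "0 \<le> B"
    using gamma pos by (simp add: B_def mu_norm_eq_norm_sqrt_weight less_imp_le)
  then have "Liminf at_top (\<lambda>t. ereal (mu_norm \<mu> (u t))) \<le> ereal B"
    using Liminf_le_of_Lyapunov[OF L_nonneg L_deriv D_le] gamma by simp
  then show ?thesis
    by (simp add: u_def p_def M_def B_def)
qed

end
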